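(* Let $F_X,F_Y$ be univariate distributions. The set $\mathfrak{Q}^{F_X,F_Y}$ of all bivariate quasi-distributions with margins $F_X,F_Y$ and the set $\mathfrak{D}^{F_X,F_Y}$ of all bivariate distributions with margins $F_X,F_Y$ are compact in the uniform norm (supremum norm on functions on $\overline{\mathbb{R}}^2$).
   Context: $\overline{\mathbb{R}}=\mathbb{R}\cup\{-\infty,\infty\}$. A univariate distribution is a nondecreasing function $G:\overline{\mathbb{R}}\to[0,1]$ with $G(-\infty)=0$, $G(\infty)=1$ (not necessarily right continuous). The volume of a rectangle $[x_1,x_2]\times[y_1,y_2]$ with respect to $F$ is $F(x_1,y_1)+F(x_2,y_2)-F(x_2,y_1)-F(x_1,y_2)$. A bivariate quasi-distribution is $F:\overline{\mathbb{R}}^2\to[0,1]$ with $F(x,-\infty)=F(-\infty,y)=0$, $F(\infty,\infty)=1$, and nonnegative volume for every rectangle with corners in $\overline{\mathbb{R}}^2$ intersecting the boundary (points with a coordinate $\pm\infty$); a bivariate distribution additionally has nonnegative volume for every rectangle. Its margins are $F(\cdot,\infty)$ and $F(\infty,\cdot)$. *)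

theory Defs
  imports "HOL-Analysis.Analysis" "HOL-Library.Extended_Real"
begin

definition univ_distribution :: "(ereal \<Rightarrow> real) \<Rightarrow> bool" where
  "univ_distribution G \<longleftrightarrow>
     mono G \<and> (\<forall>x. 0 \<le> G x \<and> G x \<le> 1) \<and> G (-\<infinity>) = 0 \<and> G \<infinity> = 1"

definition rect_volume :: "(ereal \<times> ereal \<Rightarrow> real) \<Rightarrow> ereal \<Rightarrow> ereal \<Rightarrow> ereal \<Rightarrow> ereal \<Rightarrow> real" where
  "rect_volume F x1 x2 y1 y2 = F (x1, y1) + F (x2, y2) - F (x2, y1) - F (x1, y2)"

definition meets_boundary :: "ereal \<Rightarrow> ereal \<Rightarrow> ereal \<Rightarrow> ereal \<Rightarrow> bool" where
  "meets_boundary x1 x2 y1 y2 \<longleftrightarrow>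
     \<bar>x1\<bar> = \<infinity> \<or> \<bar>x2\<bar> = \<infinity> \<or> \<bar>y1\<bar> = \<infinity> \<or> \<bar>y2\<bar> = \<infinity>"

definition biv_quasi_distribution :: "(ereal \<times> ereal \<Rightarrow> real) \<Rightarrow> bool" where
  "biv_quasi_distribution F \<longleftrightarrow>
     (\<forall>p. 0 \<le> F p \<and> F p \<le> 1) \<and>
     (\<forall>x. F (x, -\<infinity>) = 0) \<and> (\<forall>y. F (-\<infinity>, y) = 0) \<and> F (\<infinity>, \<infinity>) = 1 \<and>
     (\<forall>x1 x2 y1 y2. x1 \<le> x2 \<longrightarrow> y1 \<le> y2 \<longrightarrow> meets_boundary x1 x2 y1 y2 \<longrightarrow>
        0 \<le> rect_volume F x1 x2 y1 y2)"

definition biv_distribution :: "(ereal \<times> ereal \<Rightarrow> real) \<Rightarrow> bool" where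
  "biv_distribution F \<longleftrightarrow>
     biv_quasi_distribution F \<and>
     (\<forall>x1 x2 y1 y2. x1 \<le> x2 \<longrightarrow> y1 \<le> y2 \<longrightarrow> 0 \<le> rect_volume F x1 x2 y1 y2)"

definition has_margins :: "(ereal \<times> ereal \<Rightarrow> real) \<Rightarrow> (ereal \<Rightarrow> real) \<Rightarrow> (ereal \<Rightarrow> real) \<Rightarrow> bool" where
  "has_margins F FX FY \<longleftrightarrow> (\<forall>x. F (x, \<infinity>) = FX x) \<and> (\<forall>y. F (\<infinity>, y) = FY y)"

definition quasi_dists_with_margins :: "(ereal \<Rightarrow> real) \<Rightarrow> (ereal \<Rightarrow> real) \<Rightarrow> (ereal \<times> ereal \<Rightarrow> real) set" where
  "quasi_dists_with_margins FX FY = {F. biv_quasi_distribution F \<and> has_margins F FX FY}"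

definition dists_with_margins :: "(ereal \<Rightarrow> real) \<Rightarrow> (ereal \<Rightarrow> real) \<Rightarrow> (ereal \<times> ereal \<Rightarrow> real) set" where
  "dists_with_margins FX FY = {F. biv_distribution F \<and> has_margins F FX FY}"

definition bounded_funs :: "('a \<Rightarrow> real) set" where
  "bounded_funs = {f. bounded (range f)}"

definition sup_dist :: "('a \<Rightarrow> real) \<Rightarrow> ('a \<Rightarrow> real) \<Rightarrow> real" where
  "sup_dist f g =
     (if f \<in> bounded_funs \<and> g \<in> bounded_funs then (SUP x. \<bar>f x - g x\<bar>) else 0)"

lemma bdd_diff:
  assumes "f \<in> bounded_funs" "g \<in> bounded_funs"
  shows "bdd_above (range (\<lambda>x. \<bar>f x - g x\<bar>))"
proof -
  obtain A where A: "\<And>x. \<bar>f x\<bar> \<le> A" using assms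
    by (auto simp: bounded_funs_def bounded_iff)
  obtain B where B: "\<And>x. \<bar>g x\<bar> \<le> B" using assms
    by (auto simp: bounded_funs_def bounded_iff)
  have "\<bar>f x - g x\<bar> \<le> A + B" for x using A[of x] B[of x]
    by linarith
  then show ?thesis by (intro bdd_aboveI2) auto
qed

lemma Metric_space_sup_dist: "Metric_space bounded_funs sup_dist"
proof
  fix f g :: "'a \<Rightarrow> real"
  show "0 \<le> sup_dist f g"
  proof (cases "f \<in> bounded_funs \<and> g \<in> bounded_funs")
    case True
    then have "\<bar>f undefined - g undefined\<bar> \<le> (SUP x. \<bar>f x - g x\<bar>)"
      using bdd_diff by (intro cSUP_upper) auto
    then show ?thesis using True unfolding sup_dist_def
      by (smt (verit) abs_ge_zero)
  qed (auto simp add: sup_dist_def)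
next
  fix f g :: "'a \<Rightarrow> real"
  show "sup_dist f g = sup_dist g f" unfolding sup_dist_def
    by (simp add: abs_minus_commute conj_commute)
next
  fix f g :: "'a \<Rightarrow> real"
  assume f: "f \<in> bounded_funs" and g: "g \<in> bounded_funs"
  note b = bdd_diff[OF f g]
  show "(sup_dist f g = 0) = (f = g)"
  proof
    assume "sup_dist f g = 0"
    then have "\<And>x. \<bar>f x - g x\<bar> \<le> 0" unfolding sup_dist_def
      using cSUP_upper[OF UNIV_I b] f g by simp
    then show "f = g" by (auto simp: fun_eq_iff)
  qed (simp add: sup_dist_def)
next
  fix f g h :: "'a \<Rightarrow> real"
  assume f: "f \<in> bounded_funs" and g: "g \<in> bounded_funs" and h: "h \<in> bounded_funs"
  have "(SUP x. \<bar>f x - h x\<bar>) \<le> (SUP x. \<bar>f x - g x\<bar>) + (SUP x. \<bar>g x - h x\<bar>)"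
  proof (rule cSUP_least)
    fix x
    have "\<bar>f x - h x\<bar> \<le> \<bar>f x - g x\<bar> + \<bar>g x - h x\<bar>" by linarith
    also have "\<dots> \<le> (SUP x. \<bar>f x - g x\<bar>) + (SUP x. \<bar>g x - h x\<bar>)"
      by (intro add_mono cSUP_upper bdd_diff f g h) auto
    finally show "\<bar>f x - h x\<bar> \<le> (SUP x. \<bar>f x - g x\<bar>) + (SUP x. \<bar>g x - h x\<bar>)" .
  qed simp
  then show "sup_dist f h \<le> sup_dist f g + sup_dist g h"
    using f g h by (simp add: sup_dist_def)
qed

definition uniform_topology :: "('a \<Rightarrow> real) topology" where
  "uniform_topology = Metric_space.mtopology bounded_funs sup_dist"

end

theory Submission
  imports Defs
begin

text \<open>Both sets consist of functions with values in [0,1] that are closed under pointwise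
  limits, and each of their members F is controlled by its margins:
  \<open>\<bar>F(x,y) - F(x',y')\<bar> \<le> \<bar>F\<^sub>X x - F\<^sub>X x'\<bar> + \<bar>F\<^sub>Y y - F\<^sub>Y y'\<bar>\<close>.
  Discretising the ranges of the two margins therefore yields a single finite grid on
  which every member is determined up to \<open>\<epsilon>\<close>, which gives total boundedness. Since the
  bounded functions are complete in the supremum metric and uniform convergence implies
  pointwise convergence, the sets are also closed, hence compact.\<close>

interpretation uniform: Metric_space bounded_funs sup_dist
  by (rule Metric_space_sup_dist)

lemma uniform_topology_eq_mtopology: "uniform_topology = uniform.mtopology"
  by (simp add: uniform_topology_def)

lemma sup_dist_ge_pointwise:
  assumes "f \<in> bounded_funs" "g \<in> bounded_funs"
  shows "\<bar>f x - g x\<bar> \<le> sup_dist f g"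
  using cSUP_upper[OF UNIV_I bdd_diff[OF assms]] assms by (simp add: sup_dist_def)

lemma sup_dist_le:
  assumes "f \<in> bounded_funs" "g \<in> bounded_funs" "\<And>x. \<bar>f x - g x\<bar> \<le> B"
  shows "sup_dist f g \<le> B"
  using assms by (simp add: sup_dist_def cSUP_least)

lemma bounded_funsI: "(\<And>x. \<bar>f x\<bar> \<le> B) \<Longrightarrow> f \<in> bounded_funs"
  by (auto simp: bounded_funs_def bounded_iff)

lemma mcomplete_sup_dist: "Metric_space.mcomplete (bounded_funs :: ('a \<Rightarrow> real) set) sup_dist"
  unfolding uniform.mcomplete_def
proof (intro allI impI)
  fix \<sigma> :: "nat \<Rightarrow> 'a \<Rightarrow> real"
  assume "uniform.MCauchy \<sigma>"
  then have bnd: "\<sigma> n \<in> bounded_funs" for n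
    by (auto simp: uniform.MCauchy_def)
  have cau: "\<exists>N. \<forall>n n'. N \<le> n \<longrightarrow> N \<le> n' \<longrightarrow> sup_dist (\<sigma> n) (\<sigma> n') < \<epsilon>" if "\<epsilon> > 0" for \<epsilon>
    using \<open>uniform.MCauchy \<sigma>\<close> that by (auto simp: uniform.MCauchy_def)
  have "Cauchy (\<lambda>n. \<sigma> n x)" for x
  proof (rule metric_CauchyI)
    fix \<epsilon> :: real assume "\<epsilon> > 0"
    then obtain N where N: "\<forall>n n'. N \<le> n \<longrightarrow> N \<le> n' \<longrightarrow> sup_dist (\<sigma> n) (\<sigma> n') < \<epsilon>"
      using cau by blast
    show "\<exists>M. \<forall>m\<ge>M. \<forall>n\<ge>M. dist (\<sigma> m x) (\<sigma> n x) < \<epsilon>"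
    proof (intro exI allI impI)
      fix m n assume "N \<le> m" "N \<le> n"
      then have "sup_dist (\<sigma> m) (\<sigma> n) < \<epsilon>" using N by blast
      then show "dist (\<sigma> m x) (\<sigma> n x) < \<epsilon>"
        using sup_dist_ge_pointwise[OF bnd[of m] bnd[of n], of x] by (simp add: dist_real_def)
    qed
  qed
  define F where "F x = lim (\<lambda>n. \<sigma> n x)" for x
  have lim: "(\<lambda>n. \<sigma> n x) \<longlonglongrightarrow> F x" for x
    using \<open>\<And>x. Cauchy (\<lambda>n. \<sigma> n x)\<close> by (simp add: F_def Cauchy_convergent_iff convergent_LIMSEQ_iff)
  have tail: "\<exists>N. \<forall>n\<ge>N. \<forall>x. \<bar>\<sigma> n x - F x\<bar> \<le> \<epsilon>" if "\<epsilon> > 0" for \<epsilon>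
  proof -
    obtain N where N: "\<forall>n n'. N \<le> n \<longrightarrow> N \<le> n' \<longrightarrow> sup_dist (\<sigma> n) (\<sigma> n') < \<epsilon>"
      using cau \<open>\<epsilon> > 0\<close> by blast
    have "\<bar>\<sigma> n x - F x\<bar> \<le> \<epsilon>" if "N \<le> n" for n x
    proof (rule Lim_bounded)
      show "(\<lambda>m. \<bar>\<sigma> n x - \<sigma> m x\<bar>) \<longlonglongrightarrow> \<bar>\<sigma> n x - F x\<bar>"
        by (intro tendsto_intros lim)
      show "\<forall>m\<ge>N. \<bar>\<sigma> n x - \<sigma> m x\<bar> \<le> \<epsilon>"
      proof (intro allI impI)
        fix m assume "N \<le> m"
        then have "sup_dist (\<sigma> n) (\<sigma> m) < \<epsilon>" using N that by blast
        then show "\<bar>\<sigma> n x - \<sigma> m x\<bar> \<le> \<epsilon>"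
          using sup_dist_ge_pointwise[OF bnd[of n] bnd[of m], of x] by linarith
      qed
    qed
    then show ?thesis by blast
  qed
  have "F \<in> bounded_funs"
  proof -
    obtain N where N: "\<forall>x. \<bar>\<sigma> N x - F x\<bar> \<le> 1"
      using tail[of 1] by auto
    obtain B where B: "\<forall>x. \<bar>\<sigma> N x\<bar> \<le> B"
      using bnd[of N] by (auto simp: bounded_funs_def bounded_iff)
    have "\<bar>F x\<bar> \<le> B + 1" for x
      using spec[OF N, of x] spec[OF B, of x] by linarith
    then show ?thesis by (rule bounded_funsI)
  qed
  have "limitin uniform.mtopology \<sigma> F sequentially"
    unfolding uniform.limit_metric_sequentially
  proof (intro conjI allI impI)
    show "F \<in> bounded_funs" by fact
    fix \<epsilon> :: real assume "\<epsilon> > 0"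
    then obtain N where N: "\<forall>n\<ge>N. \<forall>x. \<bar>\<sigma> n x - F x\<bar> \<le> \<epsilon> / 2"
      using tail[of "\<epsilon> / 2"] by auto
    show "\<exists>N. \<forall>n\<ge>N. \<sigma> n \<in> bounded_funs \<and> sup_dist (\<sigma> n) F < \<epsilon>"
    proof (intro exI allI impI conjI)
      fix n assume "N \<le> n"
      show "\<sigma> n \<in> bounded_funs" by (rule bnd)
      have "sup_dist (\<sigma> n) F \<le> \<epsilon> / 2"
        using N \<open>N \<le> n\<close> by (intro sup_dist_le bnd \<open>F \<in> bounded_funs\<close>) auto
      then show "sup_dist (\<sigma> n) F < \<epsilon>"
        using \<open>\<epsilon> > 0\<close> by linarith
    qed
  qed
  then show "\<exists>F. limitin uniform.mtopology \<sigma> F sequentially" by blast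
qed

lemma limitin_uniform_topology_imp_tendsto:
  assumes "limitin uniform_topology \<sigma> F sequentially"
  shows "(\<lambda>n. \<sigma> n x) \<longlonglongrightarrow> F x"
proof (rule LIMSEQ_I)
  fix \<epsilon> :: real assume "\<epsilon> > 0"
  then obtain N where N: "\<forall>n\<ge>N. \<sigma> n \<in> bounded_funs \<and> sup_dist (\<sigma> n) F < \<epsilon>"
    and F: "F \<in> bounded_funs"
    using assms by (auto simp: uniform_topology_eq_mtopology uniform.limit_metric_sequentially)
  show "\<exists>N. \<forall>n\<ge>N. norm (\<sigma> n x - F x) < \<epsilon>"
  proof (intro exI allI impI)
    fix n assume "N \<le> n"
    then have "\<sigma> n \<in> bounded_funs" "sup_dist (\<sigma> n) F < \<epsilon>"
      using N by auto
    then show "norm (\<sigma> n x - F x) < \<epsilon>"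
      using sup_dist_ge_pointwise[OF _ F, of "\<sigma> n" x] by simp
  qed
qed

lemma closedin_uniform_topologyI:
  assumes "S \<subseteq> bounded_funs"
    and "\<And>\<sigma> F. (\<And>n. \<sigma> n \<in> S) \<Longrightarrow> (\<And>x. (\<lambda>n. \<sigma> n x) \<longlonglongrightarrow> F x) \<Longrightarrow> F \<in> S"
  shows "closedin uniform_topology S"
  unfolding uniform_topology_eq_mtopology uniform.metric_closedin_iff_sequentially_closed
proof (intro conjI allI impI)
  fix \<sigma> F
  assume \<sigma>: "range \<sigma> \<subseteq> S \<and> limitin uniform.mtopology \<sigma> F sequentially"
  then have "\<sigma> n \<in> S" for n
    by blast
  moreover have "(\<lambda>n. \<sigma> n x) \<longlonglongrightarrow> F x" for x
    using \<sigma> by (intro limitin_uniform_topology_imp_tendsto) (simp add: uniform_topology_eq_mtopology)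
  ultimately show "F \<in> S"
    by (rule assms(2))
qed (rule assms(1))

text \<open>This replaces equicontinuity in the Arzela-Ascoli theorem when the domain carries no
  topology.\<close>

definition uniformly_discretizable :: "('a \<Rightarrow> real) set \<Rightarrow> bool" where
  "uniformly_discretizable S \<longleftrightarrow>
     (\<forall>e>0. \<exists>c. finite (range c) \<and> (\<forall>F\<in>S. \<forall>x. \<bar>F x - F (c x)\<bar> \<le> e))"

lemma floor_divide_eq_imp_dist_less:
  fixes a b e :: real
  assumes "e > 0" "\<lfloor>a / e\<rfloor> = \<lfloor>b / e\<rfloor>"
  shows "\<bar>a - b\<bar> < e"
proof -
  have "\<bar>a / e - b / e\<bar> < 1"
    using assms(2) by linarith
  then show ?thesis
    using assms(1) by (simp add: diff_divide_distrib[symmetric] divide_less_eq)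
qed

lemma floor_divide_bounded:
  fixes t B e :: real
  assumes "\<bar>t\<bar> \<le> B" "e > 0"
  shows "\<lfloor>t / e\<rfloor> \<in> {\<lfloor>-B / e\<rfloor>..\<lfloor>B / e\<rfloor>}"
proof -
  have "-B \<le> t" "t \<le> B"
    using assms(1) by linarith+
  then have "-B / e \<le> t / e" "t / e \<le> B / e"
    using assms(2) by (simp_all only: divide_right_mono less_imp_le)
  then show ?thesis
    by (auto intro: floor_mono)
qed

lemma uniformly_discretizable_singleton:
  assumes "bounded (range G)"
  shows "uniformly_discretizable {G}"
  unfolding uniformly_discretizable_def
proof (intro allI impI)
  fix e :: real assume "e > 0"
  obtain B where B: "\<And>x. \<bar>G x\<bar> \<le> B"
    using assms by (auto simp: bounded_iff)
  define level where "level x = \<lfloor>G x / e\<rfloor>" for x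
  define c where "c x = (SOME y. level y = level x)" for x
  have level_c: "level (c x) = level x" for x
    unfolding c_def by (rule someI) (rule refl)
  have "range c \<subseteq> (\<lambda>k. SOME y. level y = k) ` {\<lfloor>-B / e\<rfloor>..\<lfloor>B / e\<rfloor>}"
    using floor_divide_bounded[OF B \<open>e > 0\<close>] by (auto simp: c_def level_def)
  then have "finite (range c)"
    by (rule finite_subset) simp
  moreover have "\<bar>G x - G (c x)\<bar> \<le> e" for x
    using floor_divide_eq_imp_dist_less[OF \<open>e > 0\<close>, of "G x" "G (c x)"] level_c[of x]
    by (simp add: level_def)
  ultimately show "\<exists>c. finite (range c) \<and> (\<forall>F\<in>{G}. \<forall>x. \<bar>F x - F (c x)\<bar> \<le> e)"
    by blast
qed

lemma uniformly_discretizable_if_dominated: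
  fixes S :: "('a \<times> 'b \<Rightarrow> real) set"
  assumes "bounded (range G)" "bounded (range H)"
    and dom: "\<And>F x x' y y'. F \<in> S \<Longrightarrow> \<bar>F (x, y) - F (x', y')\<bar> \<le> \<bar>G x - G x'\<bar> + \<bar>H y - H y'\<bar>"
  shows "uniformly_discretizable S"
  unfolding uniformly_discretizable_def
proof (intro allI impI)
  fix e :: real assume "e > 0"
  then obtain cG cH where cG: "finite (range cG)" "\<And>x. \<bar>G x - G (cG x)\<bar> \<le> e / 2"
    and cH: "finite (range cH)" "\<And>y. \<bar>H y - H (cH y)\<bar> \<le> e / 2"
    using assms(1,2)[THEN uniformly_discretizable_singleton]
    unfolding uniformly_discretizable_def by (metis half_gt_zero singletonI)
  define c where "c p = (cG (fst p), cH (snd p))" for p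
  have "finite (range c)"
    by (rule finite_subset[of _ "range cG \<times> range cH"]) (auto simp: c_def cG cH)
  moreover have "\<bar>F p - F (c p)\<bar> \<le> e" if "F \<in> S" for F p
    using dom[OF that, of "fst p" "snd p" "cG (fst p)" "cH (snd p)"]
      cG(2)[of "fst p"] cH(2)[of "snd p"]
    by (simp add: c_def)
  ultimately show "\<exists>c. finite (range c) \<and> (\<forall>F\<in>S. \<forall>p. \<bar>F p - F (c p)\<bar> \<le> e)"
    by blast
qed

lemma mtotally_bounded_if_uniformly_discretizable:
  assumes bound: "\<And>F x. F \<in> S \<Longrightarrow> \<bar>F x\<bar> \<le> B" and "uniformly_discretizable S"
  shows "uniform.mtotally_bounded S"
  unfolding uniform.mtotally_bounded_def
proof (intro allI impI)
  fix \<epsilon> :: real assume "\<epsilon> > 0"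
  define e where "e = \<epsilon> / 4"
  have "e > 0" using \<open>\<epsilon> > 0\<close> by (simp add: e_def)
  then obtain c where "finite (range c)" and c: "\<And>F x. F \<in> S \<Longrightarrow> \<bar>F x - F (c x)\<bar> \<le> e"
    using assms(2) by (auto simp: uniformly_discretizable_def)
  define key where "key F = restrict (\<lambda>r. \<lfloor>F r / e\<rfloor>) (range c)" for F :: "'a \<Rightarrow> real"
  have "key ` S \<subseteq> PiE (range c) (\<lambda>_. {\<lfloor>-B / e\<rfloor>..\<lfloor>B / e\<rfloor>})"
    using floor_divide_bounded[OF bound \<open>e > 0\<close>] by (auto simp: key_def)
  then have "finite (key ` S)"
    by (rule finite_subset) (simp add: finite_PiE \<open>finite (range c)\<close>)
  have S_bounded: "F \<in> bounded_funs" if "F \<in> S" for F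
    using bound[OF that] by (rule bounded_funsI)
  have same_key_close: "sup_dist F G < \<epsilon>" if "F \<in> S" "G \<in> S" "key F = key G" for F G
  proof -
    have grid: "\<bar>F (c x) - G (c x)\<bar> < e" for x
      using fun_cong[OF \<open>key F = key G\<close>, of "c x"]
      by (intro floor_divide_eq_imp_dist_less[OF \<open>e > 0\<close>]) (simp add: key_def)
    have "\<bar>F x - G x\<bar> \<le> 3 * e" for x
      using grid[of x] c[OF \<open>F \<in> S\<close>, of x] c[OF \<open>G \<in> S\<close>, of x] by linarith
    then have "sup_dist F G \<le> 3 * e"
      using that by (intro sup_dist_le S_bounded)
    then show ?thesis
      using \<open>e > 0\<close> by (simp add: e_def)
  qed
  define rep where "rep k = (SOME F. F \<in> S \<and> key F = k)" for k
  have rep: "rep (key F) \<in> S \<and> key (rep (key F)) = key F" if "F \<in> S" for F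
    unfolding rep_def by (rule someI[of _ F]) (simp add: that)
  show "\<exists>K. finite K \<and> K \<subseteq> S \<and> S \<subseteq> (\<Union>G\<in>K. uniform.mball G \<epsilon>)"
  proof (intro exI conjI)
    show "finite (rep ` key ` S)"
      using \<open>finite (key ` S)\<close> by simp
    show "rep ` key ` S \<subseteq> S"
      using rep by auto
    show "S \<subseteq> (\<Union>G\<in>rep ` key ` S. uniform.mball G \<epsilon>)"
    proof
      fix F assume "F \<in> S"
      then have "F \<in> uniform.mball (rep (key F)) \<epsilon>"
        using rep[OF \<open>F \<in> S\<close>] same_key_close[of "rep (key F)" F] S_bounded by auto
      then show "F \<in> (\<Union>G\<in>rep ` key ` S. uniform.mball G \<epsilon>)"
        using \<open>F \<in> S\<close> by blast
    qed
  qed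
qed

lemma compactin_uniform_topologyI:
  assumes "\<And>F x. F \<in> S \<Longrightarrow> \<bar>F x\<bar> \<le> B" "uniformly_discretizable S"
    and "closedin uniform_topology S"
  shows "compactin uniform_topology S"
proof -
  have "uniform.mtotally_bounded S"
    using assms(1,2) by (rule mtotally_bounded_if_uniformly_discretizable)
  then have "compactin uniform_topology (uniform_topology closure_of S)"
    using uniform.mtotally_bounded_eq_compact_closure_of[OF mcomplete_sup_dist, of S]
    by (simp add: uniform_topology_eq_mtopology)
  then show ?thesis
    using closure_of_closedin[OF assms(3)] by simp
qed

lemma biv_quasi_distribution_range:
  "biv_quasi_distribution F \<Longrightarrow> F p \<in> {0..1}"
  unfolding biv_quasi_distribution_def by (cases p) simp

text \<open>The two inequalities are the nonnegative volumes of the boundary rectangles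
  \<open>[x,x'] \<times> [-\<infinity>,y]\<close> and \<open>[x,x'] \<times> [y,\<infinity>]\<close>.\<close>

lemma biv_quasi_distribution_fst_increment:
  assumes "biv_quasi_distribution F" "has_margins F FX FY" "x \<le> x'"
  shows "0 \<le> F (x', y) - F (x, y) \<and> F (x', y) - F (x, y) \<le> FX x' - FX x"
proof -
  have "0 \<le> rect_volume F x x' (-\<infinity>) y" "0 \<le> rect_volume F x x' y \<infinity>"
    using assms(1,3) by (auto simp: biv_quasi_distribution_def meets_boundary_def)
  then show ?thesis
    using assms(1,2) by (simp add: rect_volume_def biv_quasi_distribution_def has_margins_def)
qed

lemma biv_quasi_distribution_snd_increment:
  assumes "biv_quasi_distribution F" "has_margins F FX FY" "y \<le> y'"
  shows "0 \<le> F (x, y') - F (x, y) \<and> F (x, y') - F (x, y) \<le> FY y' - FY y"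
proof -
  have "0 \<le> rect_volume F (-\<infinity>) x y y'" "0 \<le> rect_volume F x \<infinity> y y'"
    using assms(1,3) by (auto simp: biv_quasi_distribution_def meets_boundary_def)
  then show ?thesis
    using assms(1,2) by (simp add: rect_volume_def biv_quasi_distribution_def has_margins_def)
qed

lemma biv_quasi_distribution_dominated_by_margins:
  assumes "biv_quasi_distribution F" "has_margins F FX FY"
  shows "\<bar>F (x, y) - F (x', y')\<bar> \<le> \<bar>FX x - FX x'\<bar> + \<bar>FY y - FY y'\<bar>"
proof -
  have "\<bar>F (x, y) - F (x', y)\<bar> \<le> \<bar>FX x - FX x'\<bar>"
    using biv_quasi_distribution_fst_increment[OF assms, of x x' y]
      biv_quasi_distribution_fst_increment[OF assms, of x' x y]
    by (cases rule: le_cases[of x x']) arith+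
  moreover have "\<bar>F (x', y) - F (x', y')\<bar> \<le> \<bar>FY y - FY y'\<bar>"
    using biv_quasi_distribution_snd_increment[OF assms, of y y' x']
      biv_quasi_distribution_snd_increment[OF assms, of y' y x']
    by (cases rule: le_cases[of y y']) arith+
  ultimately show ?thesis
    by linarith
qed

lemma tendsto_rect_volume:
  assumes "\<And>p. (\<lambda>n. \<sigma> n p) \<longlonglongrightarrow> F p"
  shows "(\<lambda>n. rect_volume (\<sigma> n) x1 x2 y1 y2) \<longlonglongrightarrow> rect_volume F x1 x2 y1 y2"
  unfolding rect_volume_def by (intro tendsto_intros assms)

lemma quasi_dists_with_margins_closed_pointwise:
  assumes "\<And>n. \<sigma> n \<in> quasi_dists_with_margins FX FY" and lim: "\<And>p. (\<lambda>n. \<sigma> n p) \<longlonglongrightarrow> F p"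
  shows "F \<in> quasi_dists_with_margins FX FY"
proof -
  have Q: "biv_quasi_distribution (\<sigma> n)" "has_margins (\<sigma> n) FX FY" for n
    using assms(1) by (auto simp: quasi_dists_with_margins_def)
  have "F p \<in> {0..1}" for p
    using Q(1) by (intro closed_sequentially[OF _ _ lim] biv_quasi_distribution_range) auto
  moreover have "F p \<in> {0}" if "p \<in> range (\<lambda>x. (x, -\<infinity>)) \<union> range (\<lambda>y. (-\<infinity>, y))" for p
    using Q(1) that by (intro closed_sequentially[OF _ _ lim]) (auto simp: biv_quasi_distribution_def)
  moreover have "F (\<infinity>, \<infinity>) \<in> {1}"
    using Q(1) by (intro closed_sequentially[OF _ _ lim]) (auto simp: biv_quasi_distribution_def)
  moreover have "rect_volume F x1 x2 y1 y2 \<in> {0..}"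
    if "x1 \<le> x2" "y1 \<le> y2" "meets_boundary x1 x2 y1 y2" for x1 x2 y1 y2
    using Q(1) that
    by (intro closed_sequentially[OF _ _ tendsto_rect_volume[OF lim]])
      (auto simp: biv_quasi_distribution_def)
  moreover have "F (x, \<infinity>) \<in> {FX x}" "F (\<infinity>, y) \<in> {FY y}" for x y
    using Q(2) by (intro closed_sequentially[OF _ _ lim]; auto simp: has_margins_def)+
  ultimately show ?thesis
    by (auto simp: quasi_dists_with_margins_def biv_quasi_distribution_def has_margins_def)
qed

lemma dists_with_margins_closed_pointwise:
  assumes "\<And>n. \<sigma> n \<in> dists_with_margins FX FY" and lim: "\<And>p. (\<lambda>n. \<sigma> n p) \<longlonglongrightarrow> F p"
  shows "F \<in> dists_with_margins FX FY"
proof -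
  have "F \<in> quasi_dists_with_margins FX FY"
    using assms(1)
    by (intro quasi_dists_with_margins_closed_pointwise[OF _ lim])
      (auto simp: dists_with_margins_def quasi_dists_with_margins_def biv_distribution_def)
  moreover have "rect_volume F x1 x2 y1 y2 \<in> {0..}" if "x1 \<le> x2" "y1 \<le> y2" for x1 x2 y1 y2
    using assms(1) that
    by (intro closed_sequentially[OF _ _ tendsto_rect_volume[OF lim]])
      (auto simp: dists_with_margins_def biv_distribution_def)
  ultimately show ?thesis
    by (auto simp: dists_with_margins_def quasi_dists_with_margins_def biv_distribution_def)
qed

lemma closedin_quasi_dists_with_margins:
  "closedin uniform_topology (quasi_dists_with_margins FX FY)"
proof (rule closedin_uniform_topologyI[OF _ quasi_dists_with_margins_closed_pointwise])
  show "quasi_dists_with_margins FX FY \<subseteq> bounded_funs"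
  proof
    fix F assume "F \<in> quasi_dists_with_margins FX FY"
    then have "\<bar>F p\<bar> \<le> 1" for p
      using biv_quasi_distribution_range[of F p] by (simp add: quasi_dists_with_margins_def)
    then show "F \<in> bounded_funs" by (rule bounded_funsI)
  qed
qed

lemma dists_with_margins_subset_quasi_dists:
  "dists_with_margins FX FY \<subseteq> quasi_dists_with_margins FX FY"
  by (auto simp: dists_with_margins_def quasi_dists_with_margins_def biv_distribution_def)

lemma closedin_dists_with_margins:
  "closedin uniform_topology (dists_with_margins FX FY)"
proof (rule closedin_uniform_topologyI[OF _ dists_with_margins_closed_pointwise])
  show "dists_with_margins FX FY \<subseteq> bounded_funs"
    using order_trans[OF dists_with_margins_subset_quasi_dists
        closedin_subset[OF closedin_quasi_dists_with_margins]]
    by (simp add: uniform_topology_eq_mtopology)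
qed

lemma compactin_quasi_dists_with_margins:
  assumes "bounded (range FX)" "bounded (range FY)"
  shows "compactin uniform_topology (quasi_dists_with_margins FX FY)"
proof (rule compactin_uniform_topologyI)
  show "\<bar>F p\<bar> \<le> 1" if "F \<in> quasi_dists_with_margins FX FY" for F p
    using biv_quasi_distribution_range[of F p] that by (simp add: quasi_dists_with_margins_def)
  show "uniformly_discretizable (quasi_dists_with_margins FX FY)"
    using assms by (rule uniformly_discretizable_if_dominated)
      (auto simp: quasi_dists_with_margins_def biv_quasi_distribution_dominated_by_margins)
qed (rule closedin_quasi_dists_with_margins)

theorem corollary5:
  fixes FX FY :: "ereal \<Rightarrow> real"
  assumes "univ_distribution FX" and "univ_distribution FY"
  shows "compactin uniform_topology (quasi_dists_with_margins FX FY)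
       \<and> compactin uniform_topology (dists_with_margins FX FY)"
proof -
  have "bounded (range FX)" "bounded (range FY)"
    using assms by (auto simp: univ_distribution_def bounded_iff intro!: exI[of _ 1])
  then have "compactin uniform_topology (quasi_dists_with_margins FX FY)"
    by (rule compactin_quasi_dists_with_margins)
  moreover have "compactin uniform_topology (dists_with_margins FX FY)"
    using calculation dists_with_margins_subset_quasi_dists closedin_dists_with_margins
    by (rule closed_compactin)
  ultimately show ?thesis ..
qed

end
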